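(* If $k \geq 9$ and $|q - q_k| < q_k^{-2k-6}$, then $d_{\mathrm{H}}(\pi_q(S_{k-1}), \pi_{q_k}(S_{k-1})) < q_k^{-2k-4}$.
   Context: $q_k$ is the unique root in $(1,2)$ of $x^k - x^{k-1} - \cdots - x - 1 = 0$. $\pi_q((\epsilon_j)_{j\ge1}) = \sum_{j\ge1}\epsilon_j q^{-j}$. $S_{k-1}$ is the set of $(\epsilon_j) \in \{0,1\}^\mathbb{N}$ containing no block of consecutive entries equal to $01^{k-1}$ or $10^{k-1}$. $d_{\mathrm{H}}(X,Y) = \max\{\sup_{x\in X}d(x,Y),\sup_{y\in Y}d(y,X)\}$ is the Hausdorff distance. *)

theory Defs
  imports "HOL-Analysis.Analysis"
begin

definition qk :: "nat \<Rightarrow> real" where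
  "qk k = (THE x. 1 < x \<and> x < 2 \<and> x ^ k - (\<Sum>i<k. x ^ i) = 0)"

text \<open>0-1 sequences (eps_j)_{j>=1} are represented as functions nat => bool,
  where position j (0-based) holds eps_(j+1); True means 1, False means 0.\<close>
definition proj :: "real \<Rightarrow> (nat \<Rightarrow> bool) \<Rightarrow> real" where
  "proj q e = (\<Sum>j. (if e j then 1 else 0) / q ^ (Suc j))"

definition Sset :: "nat \<Rightarrow> (nat \<Rightarrow> bool) set" where
  "Sset m = {e. \<not> (\<exists>n. \<not> e n \<and> (\<forall>i\<in>{1..m}. e (n + i)))
              \<and> \<not> (\<exists>n. e n \<and> (\<forall>i\<in>{1..m}. \<not> e (n + i)))}"

definition hausdorff_dist :: "'a::metric_space set \<Rightarrow> 'a set \<Rightarrow> real" where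
  "hausdorff_dist X Y = max (SUP x\<in>X. infdist x Y) (SUP y\<in>Y. infdist y X)"

end

theory Submission
  imports Defs
begin

text \<open>The estimate needs no combinatorics of \<open>S\<^sub>k\<^sub>-\<^sub>1\<close>: for every digit sequence \<open>e\<close>,
  the map \<open>q \<mapsto> \<pi>\<^sub>q(e)\<close> moves by at most \<open>1/(q-1) - 1/(p-1)\<close> between \<open>q\<close> and \<open>p\<close>,
  the variation of the all-ones sequence. Pairing \<open>\<pi>\<^sub>q(e)\<close> with \<open>\<pi>\<^sub>p(e)\<close> bounds the
  Hausdorff distance by \<open>|q - q\<^sub>k|/((q-1)(q\<^sub>k-1))\<close>, and \<open>q\<^sub>k > 1.8\<close> makes the
  factor \<open>1/((q-1)(q\<^sub>k-1))\<close> smaller than \<open>q\<^sub>k\<^sup>2\<close>.\<close>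

lemma inverse_power_sums:
  assumes "1 < (q::real)"
  shows "(\<lambda>j. 1 / q ^ Suc j) sums (1 / (q - 1))"
proof -
  have "(\<lambda>j. (1/q) * (1/q) ^ j) sums ((1/q) * (1 / (1 - 1/q)))"
    using assms by (intro sums_mult geometric_sums) simp
  moreover have "(1/q) * (1 / (1 - 1/q)) = 1 / (q - 1)"
    using assms by (simp add: field_simps)
  ultimately show ?thesis
    by (simp add: power_divide)
qed

lemma summable_proj:
  assumes "1 < (q::real)"
  shows "summable (\<lambda>j. (if e j then 1 else 0) / q ^ Suc j)"
  by (rule summable_comparison_test'[OF sums_summable[OF inverse_power_sums[OF assms]]])
     (use assms in \<open>simp add: divide_le_eq_1\<close>)

lemma proj_diff_le:
  assumes "1 < (q::real)" "q \<le> p"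
  shows "0 \<le> proj q e - proj p e" "proj q e - proj p e \<le> 1 / (q - 1) - 1 / (p - 1)"
proof -
  define t where "t j = (if e j then 1 / q ^ Suc j - 1 / p ^ Suc j else 0)" for j
  have p1: "1 < p" using assms by simp
  have step_sums: "(\<lambda>j. 1 / q ^ Suc j - 1 / p ^ Suc j) sums (1 / (q - 1) - 1 / (p - 1))"
    using sums_diff[OF inverse_power_sums[OF assms(1)] inverse_power_sums[OF p1]] .
  have step_nonneg: "0 \<le> 1 / q ^ Suc j - 1 / p ^ Suc j" for j
  proof -
    have "1 / p ^ Suc j \<le> 1 / q ^ Suc j"
      using assms by (intro divide_left_mono power_mono mult_pos_pos) auto
    then show ?thesis by simp
  qed
  have "proj q e - proj p e
      = (\<Sum>j. (if e j then 1 else 0) / q ^ Suc j - (if e j then 1 else 0) / p ^ Suc j)"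
    unfolding proj_def by (rule suminf_diff[OF summable_proj[OF assms(1)] summable_proj[OF p1]])
  also have "\<dots> = (\<Sum>j. t j)"
    by (rule suminf_cong) (simp add: t_def)
  finally have proj_diff_eq: "proj q e - proj p e = (\<Sum>j. t j)" .
  have t_summable: "summable t"
    by (rule summable_comparison_test'[OF sums_summable[OF step_sums]])
       (use step_nonneg in \<open>simp add: t_def\<close>)
  then show "0 \<le> proj q e - proj p e"
    unfolding proj_diff_eq using step_nonneg by (simp add: suminf_nonneg t_def)
  have "(\<Sum>j. t j) \<le> 1 / (q - 1) - 1 / (p - 1)"
    using step_nonneg by (intro sums_le[OF _ summable_sums[OF t_summable] step_sums])
      (simp add: t_def)
  with proj_diff_eq show "proj q e - proj p e \<le> 1 / (q - 1) - 1 / (p - 1)"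
    by simp
qed

lemma abs_proj_diff_le:
  assumes "1 < (q::real)" "1 < p"
  shows "\<bar>proj q e - proj p e\<bar> \<le> \<bar>q - p\<bar> / ((q - 1) * (p - 1))"
proof -
  have ordered_case: "\<bar>proj q e - proj p e\<bar> \<le> \<bar>q - p\<bar> / ((q - 1) * (p - 1))"
    if "1 < q" "q \<le> p" for q p :: real
  proof -
    have "1 / (q - 1) - 1 / (p - 1) = \<bar>q - p\<bar> / ((q - 1) * (p - 1))"
      using that by (simp add: field_simps)
    then show ?thesis
      using proj_diff_le[OF that] by simp
  qed
  show ?thesis
    using ordered_case[of q p] ordered_case[of p q] assms
    by (cases "q \<le> p") (simp_all add: abs_minus_commute mult.commute)
qed

lemma root_iff_sum_inverse_powers:
  assumes "0 < (x::real)"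
  shows "x ^ k - (\<Sum>i<k. x ^ i) = 0 \<longleftrightarrow> (\<Sum>i<k. 1 / x ^ (k - i)) = 1"
proof -
  have "(\<Sum>i<k. 1 / x ^ (k - i)) = (\<Sum>i<k. x ^ i) / x ^ k"
    unfolding sum_divide_distrib
    by (rule sum.cong) (use assms in \<open>auto simp: power_diff\<close>)
  then show ?thesis
    using assms by (simp add: divide_eq_1_iff)
qed

lemma positive_root_unique:
  assumes "0 < (x::real)" "0 < y"
    and "x ^ k - (\<Sum>i<k. x ^ i) = 0" "y ^ k - (\<Sum>i<k. y ^ i) = 0"
  shows "x = y"
proof -
  have "(\<Sum>i<k. 1 / b ^ (k - i)) < (\<Sum>i<k. 1 / a ^ (k - i))"
    if "0 < a" "a < b" "0 < k" for a b :: real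
    using that by (intro sum_strict_mono divide_strict_left_mono power_strict_mono) auto
  moreover have "0 < k"
    using assms(3) by (cases k) auto
  ultimately show ?thesis
    using assms root_iff_sum_inverse_powers[of x k] root_iff_sum_inverse_powers[of y k]
    by (metis less_irrefl linorder_neqE_linordered_idom)
qed

lemma qk_eqI:
  assumes "1 < x" "x < 2" "x ^ k - (\<Sum>i<k. x ^ i) = 0"
  shows "qk k = x"
  unfolding qk_def
  using assms positive_root_unique[of _ x k] by (intro the_equality) auto

lemma qk_bounds:
  assumes "3 \<le> k"
  shows "1.8 < qk k" "qk k < 2"
proof -
  define f where "f x = x ^ k - (\<Sum>i<k. x ^ i)" for x :: real
  have f_closed: "f x = x ^ k - (x ^ k - 1) / (x - 1)" if "x \<noteq> 1" for x
    unfolding f_def sum_gp_strict using that by (simp add: field_simps)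
  have "(5::real) < 1.8 ^ 3" by (simp add: power_divide)
  also have "\<dots> \<le> 1.8 ^ k" using assms by (intro power_increasing) auto
  finally have "f 1.8 < 0" using f_closed[of "1.8"] by simp
  moreover have "0 < f 2" using f_closed[of 2] by simp
  moreover have "continuous_on {1.8..2} f" unfolding f_def by (intro continuous_intros)
  ultimately obtain r where "1.8 \<le> r" "r \<le> 2" "f r = 0"
    using IVT'[of f "1.8" 0 2] by auto
  moreover have "r \<noteq> 1.8" "r \<noteq> 2"
    using \<open>f r = 0\<close> \<open>f 1.8 < 0\<close> \<open>0 < f 2\<close> by (metis less_irrefl)+
  ultimately have "1.8 < r" "r < 2" by simp_all
  moreover have "qk k = r"
    using \<open>f r = 0\<close> \<open>1.8 < r\<close> \<open>r < 2\<close> by (intro qk_eqI) (auto simp: f_def)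
  ultimately show "1.8 < qk k" "qk k < 2" by simp_all
qed

lemma constant_False_in_Sset:
  assumes "0 < m"
  shows "(\<lambda>_. False) \<in> Sset m"
  using assms unfolding Sset_def by auto

lemma hausdorff_dist_image_le:
  fixes f g :: "'b \<Rightarrow> 'a::metric_space"
  assumes "S \<noteq> {}" and close: "\<And>s. s \<in> S \<Longrightarrow> dist (f s) (g s) \<le> M"
  shows "hausdorff_dist (f ` S) (g ` S) \<le> M"
proof -
  have one_side: "(SUP x\<in>u ` S. infdist x (v ` S)) \<le> M"
    if "\<And>s. s \<in> S \<Longrightarrow> dist (u s) (v s) \<le> M" for u v :: "'b \<Rightarrow> 'a"
  proof (rule cSUP_least)
    show "u ` S \<noteq> {}" using assms(1) by simp
  next
    fix x assume "x \<in> u ` S"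
    then obtain s where "s \<in> S" "x = u s" by auto
    then have "infdist x (v ` S) \<le> dist (u s) (v s)" by (simp add: infdist_le)
    also have "\<dots> \<le> M" using that \<open>s \<in> S\<close> .
    finally show "infdist x (v ` S) \<le> M" .
  qed
  show ?thesis
    unfolding hausdorff_dist_def
    using one_side[of f g] one_side[of g f] close by (simp add: dist_commute)
qed

lemma perturbation_factor_bound:
  assumes "1.8 < (p::real)" "\<bar>q - p\<bar> < 1 / p ^ (n + 2)"
  shows "1 < q" "\<bar>q - p\<bar> / ((q - 1) * (p - 1)) < 1 / p ^ n"
proof -
  have "3.24 < p ^ 2"
    using power_strict_mono[of "1.8" p 2] assms(1) by (simp add: power_divide)
  note assms(2)
  also have "1 / p ^ (n + 2) \<le> 1 / p ^ 2"
    using assms(1) by (intro divide_left_mono power_increasing) auto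
  also have "\<dots> < 1 / 3.24"
    using \<open>3.24 < p ^ 2\<close> by (intro divide_strict_left_mono) auto
  finally have "0.49 < q - 1"
    using assms(1) unfolding abs_less_iff by simp
  then show "1 < q" by simp
  have factor_lower: "0.49 * 0.8 \<le> (q - 1) * (p - 1)"
    using \<open>0.49 < q - 1\<close> assms(1) by (intro mult_mono) auto
  have "3.24 * (0.49 * 0.8) \<le> p ^ 2 * ((q - 1) * (p - 1))"
    using mult_mono[OF less_imp_le[OF \<open>3.24 < p ^ 2\<close>] factor_lower] by simp
  then have "1 / p ^ 2 \<le> (q - 1) * (p - 1)"
    using assms(1) by (simp add: divide_le_eq mult.commute)
  then have "1 / p ^ 2 / p ^ n \<le> (q - 1) * (p - 1) / p ^ n"
    using assms(1) by (intro divide_right_mono) auto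
  then have "1 / p ^ (n + 2) \<le> (q - 1) * (p - 1) / p ^ n"
    by (simp add: power_add power2_eq_square mult.commute mult.left_commute)
  with assms(2) have "\<bar>q - p\<bar> < (q - 1) * (p - 1) / p ^ n" by linarith
  then show "\<bar>q - p\<bar> / ((q - 1) * (p - 1)) < 1 / p ^ n"
    using factor_lower by (simp add: pos_divide_less_eq)
qed

theorem lemma4p7:
  fixes k :: nat and q :: real
  assumes "k \<ge> 9"
    and "\<bar>q - qk k\<bar> < 1 / qk k ^ (2 * k + 6)"
  shows "hausdorff_dist (proj q ` Sset (k - 1)) (proj (qk k) ` Sset (k - 1))
           < 1 / qk k ^ (2 * k + 4)"
proof -
  have "1.8 < qk k"
    using qk_bounds assms(1) by simp
  moreover have "\<bar>q - qk k\<bar> < 1 / qk k ^ ((2 * k + 4) + 2)"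
    using assms(2) by (simp add: add.commute)
  ultimately have "1 < q" and factor:
    "\<bar>q - qk k\<bar> / ((q - 1) * (qk k - 1)) < 1 / qk k ^ (2 * k + 4)"
    using perturbation_factor_bound by blast+
  have "hausdorff_dist (proj q ` Sset (k - 1)) (proj (qk k) ` Sset (k - 1))
      \<le> \<bar>q - qk k\<bar> / ((q - 1) * (qk k - 1))"
    using constant_False_in_Sset[of "k - 1"] assms(1) \<open>1 < q\<close> \<open>1.8 < qk k\<close>
    by (intro hausdorff_dist_image_le) (auto simp: dist_real_def intro: abs_proj_diff_le)
  with factor show ?thesis by linarith
qed

end
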